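(* Let $\varphi$ be an individually rational rule that is resource monotonic, strategy-proof and satisfies monotonic discoverability, and let $\mathbb{S}$ be the canonical pick-an-object mechanism that sequentializes $\varphi$. Then agents following straightforward strategies constitute the unique perfect ex-post equilibrium of the game induced by $\mathbb{S}$.
   Context: Let $A=\{a_1,\dots,a_n\}$ be a finite set of agents and $O=\{o_1,\dots,o_m\}\cup\{\emptyset\}$ a finite set of object types ($\emptyset$ the null object). Each agent $a$ has a strict preference $P_a$ over $O$ with weak version $R_a$; $\mathbb{P}$ is the set of strict preferences, $\mathcal{P}=\mathbb{P}^n$ the set of profiles; $P_{-a}$ denotes the others' preferences. An allocation is a function $\mu:A\to O$; a rule is $\varphi:\mathcal{P}\to\{\text{allocations}\}$, $\varphi_a(P)=\varphi(P)(a)$. Individually rational: $\varphi_a(P)R_a\emptyset$ always. Strategy-proof: $\varphi_a(P_a,P_{-a})R_a\varphi_a(P'_a,P_{-a})$ for all $a,P,P'_a$. Resource monotonic: for every agent $a^*$, profile $P$ and $P'_{a^*}$ with $\varphi_{a^*}(P'_{a^*},P_{-a^*})=\emptyset$, every $a\neq a^*$ has $\varphi_a(P'_{a^*},P_{-a^*})\,R_a\,\varphi_a(P)$. Monotonic discoverability: for $P$ and allocation $\mu$, $\mathcal{L}(P,\mu)$ is the set of profiles $P'$ such that for every $a$, $P'_a$ agrees with $P_a$ on $\mu(a)$ and on all objects $P_a$ ranks above $\mu(a)$ (same set above $\mu(a)$, same order). $\varphi$ satisfies monotonic discoverability if for every $\mu$ and $P$, either $\varphi(P)=\mu$ or some agent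 $a^*$ has $\varphi_{a^*}(P')\neq\mu(a^* )$ for all $P'\in\mathcal{L}(P,\mu)$. PAO mechanisms: a choice history is a finite (possibly empty) sequence $((\Omega_1,\omega_1),\dots,(\Omega_k,\omega_k))$, $\Omega_j\subseteq O$, $\omega_j\in\Omega_j$, with last choice $\omega_k$; $P_a$ is consistent with it if $\omega_jR_ao$ for all $j$ and $o\in\Omega_j$. A collective history $h^A=(h_1,\dots,h_n)$ is an $n$-tuple of choice histories ($h^{A-\emptyset}$: all empty); a profile $P$ is consistent with $h^A$ if each $P_{a_i}$ is consistent with $h_i$, and $P(h^A)$ is the set of such profiles. Define $\varphi(h^A)=\{\varphi(P):P\in P(h^A)\}$ and $\mu_i^\varphi(h^A)=\{\mu(a_i):\mu\in\varphi(h^A)\}$. A menu function $\mathbb{S}$ maps collective histories to $n$-tuples of subsets of $O$, with non-empty initial menus and, afterwards, agent $i$'s menu a subset of her last menu minus her last choice. The PAO mechanism $\mathbb{S}$: in period 1 every agent chooses from her initial menu; in each later period, given current $h^A$, if all menus in $\mathbb{S}(h^A)$ are empty the procedure stops and each agent receives her last choice; otherwise agents with non-empty menus choose an element; (menu, choice) is appended to each chooser's history. Straightforward strategy w.r.t. $P_a$: always choose the $P_a$-best element of the menu. $\mathbb{S}$ sequentializes $\varphi$ if straightforward play w.r.t. any $P$ yields $\varphi(P)$. The canonical PAO mechanism for $\varphi$ is given by: agent $i$'s menu $\mathbb{S}^i(h^A)$ is $\emptyset$ if $|\varphi(h^A)|=1$ or if agent $i$'s last choice in $h^A$ belongs to $\mu_i^\varphi(h^A)$,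 and is $\mu_i^\varphi(h^A)$ otherwise. Strategies and equilibrium: $H^A_{\mathbb{S}}$ is the set of collective histories that can arise, $H^A_{\mathbb{S}}(a)$ the set of agent $a$'s histories within them. A strategy for $a$ maps each pair (own history in $H^A_{\mathbb{S}}(a)\cup\{\emptyset\}$, menu $\Omega$) to an element of $\Omega$; a type-strategy maps preferences to strategies. $\mathcal{O}_a|_{h^A}(\sigma)$ is $a$'s assignment when $\mathbb{S}$ is run from $h^A$ with strategy profile $\sigma$. A type-strategy profile $(\Sigma_a)$ is a perfect ex-post equilibrium if for all $a$, all $h^A\in H^A_{\mathbb{S}}\cup\{h^{A-\emptyset}\}$, all strategies $\sigma'_a$ and all $P\in\mathcal{P}$: $\mathcal{O}_a|_{h^A}(\Sigma_a(P_a),(\Sigma_{a'}(P_{a'}))_{a'\neq a})\,R_a\,\mathcal{O}_a|_{h^A}(\sigma'_a,(\Sigma_{a'}(P_{a'}))_{a'\neq a})$. *)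

theory Defs
  imports Main
begin

text \<open>A strict preference is a strict linear order
  on all objects, given as a relation p (p x y: x strictly preferred to y).\<close>

type_synonym 'o pref = "'o \<Rightarrow> 'o \<Rightarrow> bool"
type_synonym ('a, 'o) profile = "'a \<Rightarrow> 'o pref"
type_synonym ('a, 'o) rule = "('a, 'o) profile \<Rightarrow> 'a \<Rightarrow> 'o"
type_synonym 'o chist = "('o set \<times> 'o) list"
type_synonym ('a, 'o) chistA = "'a \<Rightarrow> 'o chist"
type_synonym ('a, 'o) menufun = "('a, 'o) chistA \<Rightarrow> 'a \<Rightarrow> 'o set"
type_synonym 'o strategy = "'o chist \<Rightarrow> 'o set \<Rightarrow> 'o"

definition strict_pref :: "'o pref \<Rightarrow> bool" where
  "strict_pref p \<longleftrightarrow> (\<forall>x. \<not> p x x) \<and> (\<forall>x y z. p x y \<longrightarrow> p y z \<longrightarrow> p x z)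
     \<and> (\<forall>x y. x \<noteq> y \<longrightarrow> p x y \<or> p y x)"

definition weak :: "'o pref \<Rightarrow> 'o \<Rightarrow> 'o \<Rightarrow> bool" where
  "weak p x y \<longleftrightarrow> x = y \<or> p x y"

definition valid_profile :: "('a, 'o) profile \<Rightarrow> bool" where
  "valid_profile P \<longleftrightarrow> (\<forall>a. strict_pref (P a))"

definition individually_rational :: "'o \<Rightarrow> ('a, 'o) rule \<Rightarrow> bool" where
  "individually_rational null \<phi> \<longleftrightarrow>
     (\<forall>P a. valid_profile P \<longrightarrow> weak (P a) (\<phi> P a) null)"

definition strategy_proof :: "('a, 'o) rule \<Rightarrow> bool" where
  "strategy_proof \<phi> \<longleftrightarrow>
     (\<forall>P a p'. valid_profile P \<longrightarrow> strict_pref p' \<longrightarrow>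
        weak (P a) (\<phi> P a) (\<phi> (P(a := p')) a))"

definition resource_monotonic :: "'o \<Rightarrow> ('a, 'o) rule \<Rightarrow> bool" where
  "resource_monotonic null \<phi> \<longleftrightarrow>
     (\<forall>astar P p'. valid_profile P \<longrightarrow> strict_pref p' \<longrightarrow>
        \<phi> (P(astar := p')) astar = null \<longrightarrow>
        (\<forall>a. a \<noteq> astar \<longrightarrow> weak (P a) (\<phi> (P(astar := p')) a) (\<phi> P a)))"

definition upper :: "'o pref \<Rightarrow> 'o \<Rightarrow> 'o set" where
  "upper p ob = {x. weak p x ob}"

definition Lset :: "('a, 'o) profile \<Rightarrow> ('a \<Rightarrow> 'o) \<Rightarrow> ('a, 'o) profile set" where
  "Lset P \<mu> = {P'. valid_profile P' \<and>
     (\<forall>a. upper (P' a) (\<mu> a) = upper (P a) (\<mu> a) \<and>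
          (\<forall>x\<in>upper (P a) (\<mu> a). \<forall>y\<in>upper (P a) (\<mu> a). P' a x y \<longleftrightarrow> P a x y))}"

definition monotonic_discoverability :: "('a, 'o) rule \<Rightarrow> bool" where
  "monotonic_discoverability \<phi> \<longleftrightarrow>
     (\<forall>\<mu> P. valid_profile P \<longrightarrow>
        \<phi> P = \<mu> \<or> (\<exists>astar. \<forall>P'\<in>Lset P \<mu>. \<phi> P' astar \<noteq> \<mu> astar))"

definition consistent :: "'o pref \<Rightarrow> 'o chist \<Rightarrow> bool" where
  "consistent p h \<longleftrightarrow> (\<forall>(\<Omega>, \<omega>) \<in> set h. \<forall>ob\<in>\<Omega>. weak p \<omega> ob)"

definition consistent_profiles :: "('a, 'o) chistA \<Rightarrow> ('a, 'o) profile set" where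
  "consistent_profiles hA = {P. valid_profile P \<and> (\<forall>a. consistent (P a) (hA a))}"

definition rule_hist :: "('a, 'o) rule \<Rightarrow> ('a, 'o) chistA \<Rightarrow> ('a \<Rightarrow> 'o) set" where
  "rule_hist \<phi> hA = \<phi> ` consistent_profiles hA"

definition mu_hist :: "('a, 'o) rule \<Rightarrow> ('a, 'o) chistA \<Rightarrow> 'a \<Rightarrow> 'o set" where
  "mu_hist \<phi> hA i = (\<lambda>\<mu>. \<mu> i) ` rule_hist \<phi> hA"

definition empty_hist :: "('a, 'o) chistA" where
  "empty_hist = (\<lambda>_. [])"

definition canonical_menu :: "('a, 'o) rule \<Rightarrow> ('a, 'o) menufun" where
  "canonical_menu \<phi> hA i =
     (if card (rule_hist \<phi> hA) = 1 then {}
      else if hA i \<noteq> [] \<and> snd (last (hA i)) \<in> mu_hist \<phi> hA i then {}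
      else mu_hist \<phi> hA i)"

inductive reachable :: "('a, 'o) menufun \<Rightarrow> ('a, 'o) chistA \<Rightarrow> bool" for S where
  start: "reachable S empty_hist"
| step: "reachable S h \<Longrightarrow> \<not> (\<forall>i. S h i = {}) \<Longrightarrow> (\<forall>i. S h i \<noteq> {} \<longrightarrow> c i \<in> S h i)
         \<Longrightarrow> reachable S (\<lambda>i. if S h i = {} then h i else h i @ [(S h i, c i)])"

definition is_PAO :: "('a, 'o) menufun \<Rightarrow> bool" where
  "is_PAO S \<longleftrightarrow> (\<forall>i. S empty_hist i \<noteq> {}) \<and>
     (\<forall>h i. reachable S h \<longrightarrow> h i \<noteq> [] \<longrightarrow>
        S h i \<subseteq> fst (last (h i)) - {snd (last (h i))})"

definition mstep :: "('a, 'o) menufun \<Rightarrow> ('a \<Rightarrow> 'o strategy) \<Rightarrow> ('a, 'o) chistA \<Rightarrow> ('a, 'o) chistA" where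
  "mstep S \<sigma> h = (\<lambda>i. if S h i = {} then h i else h i @ [(S h i, \<sigma> i (h i) (S h i))])"

inductive runs_to :: "('a, 'o) menufun \<Rightarrow> ('a \<Rightarrow> 'o strategy) \<Rightarrow> ('a, 'o) chistA \<Rightarrow> ('a, 'o) chistA \<Rightarrow> bool"
  for S \<sigma> where
  stop: "(\<forall>i. S h i = {}) \<Longrightarrow> runs_to S \<sigma> h h"
| go: "\<not> (\<forall>i. S h i = {}) \<Longrightarrow> runs_to S \<sigma> (mstep S \<sigma> h) h' \<Longrightarrow> runs_to S \<sigma> h h'"

definition outcome :: "('a, 'o) menufun \<Rightarrow> ('a \<Rightarrow> 'o strategy) \<Rightarrow> ('a, 'o) chistA \<Rightarrow> 'a \<Rightarrow> 'o" where
  "outcome S \<sigma> hA a = snd (last ((THE h'. runs_to S \<sigma> hA h') a))"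

definition best :: "'o pref \<Rightarrow> 'o set \<Rightarrow> 'o" where
  "best p \<Omega> = (THE x. x \<in> \<Omega> \<and> (\<forall>y\<in>\<Omega>. y \<noteq> x \<longrightarrow> p x y))"

definition straightforward :: "'o pref \<Rightarrow> 'o strategy" where
  "straightforward p = (\<lambda>h \<Omega>. best p \<Omega>)"

definition sequentializes :: "('a, 'o) menufun \<Rightarrow> ('a, 'o) rule \<Rightarrow> bool" where
  "sequentializes S \<phi> \<longleftrightarrow>
     (\<forall>P. valid_profile P \<longrightarrow>
        (\<forall>a. outcome S (\<lambda>b. straightforward (P b)) empty_hist a = \<phi> P a))"

definition valid_strategy :: "'o strategy \<Rightarrow> bool" where
  "valid_strategy \<sigma> \<longleftrightarrow> (\<forall>h \<Omega>. \<Omega> \<noteq> {} \<longrightarrow> \<sigma> h \<Omega> \<in> \<Omega>)"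

definition valid_type_strategy :: "('a \<Rightarrow> 'o pref \<Rightarrow> 'o strategy) \<Rightarrow> bool" where
  "valid_type_strategy \<Sigma> \<longleftrightarrow> (\<forall>a p. strict_pref p \<longrightarrow> valid_strategy (\<Sigma> a p))"

definition perfect_ex_post_eq :: "('a, 'o) menufun \<Rightarrow> ('a \<Rightarrow> 'o pref \<Rightarrow> 'o strategy) \<Rightarrow> bool" where
  "perfect_ex_post_eq S \<Sigma> \<longleftrightarrow>
     (\<forall>a hA \<sigma>' P. reachable S hA \<longrightarrow> valid_strategy \<sigma>' \<longrightarrow> valid_profile P \<longrightarrow>
        weak (P a) (outcome S (\<lambda>b. \<Sigma> b (P b)) hA a)
                   (outcome S ((\<lambda>b. \<Sigma> b (P b))(a := \<sigma>')) hA a))"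

end

(* For a reachable history h and a profile P, let P^h raise every agent's past choices in h
   to the top of her preference, in the order they were made. P^h is consistent with h and
   agrees with P on all current and later menus, which avoid past choices. Hence straightforward
   play from h under P ends where straightforward play from the start under P^h ends, so its
   outcome is phi(P^h).

   Equilibrium: the terminal history of a unilateral deviation of agent a is also the outcome
   of straightforward play under P^h with a's preference replaced by her own choices raised to
   the top, so strategy-proofness of phi at P^h shows that the deviation does not pay.

   Uniqueness, by induction from the end of the game: turning agents into the type that ranks
   null first harms nobody else (individual rationality, resource monotonicity and monotonic
   discoverability), so against such opponents a mover obtains whatever object of her menu she
   picks. In equilibrium a null-first type therefore picks null, and then a mover
   who did not pick her best object x could profitably deviate to x. *)

theory Submission
  imports Defs "HOL-Library.Countable" "HOL-Library.Sublist"
begin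

lemma strict_pref_irrefl: "strict_pref p \<Longrightarrow> \<not> p x x"
  by (simp add: strict_pref_def)

lemma strict_pref_trans: "strict_pref p \<Longrightarrow> p x y \<Longrightarrow> p y z \<Longrightarrow> p x z"
  unfolding strict_pref_def by blast

lemma strict_pref_total: "strict_pref p \<Longrightarrow> x \<noteq> y \<Longrightarrow> p x y \<or> p y x"
  unfolding strict_pref_def by blast

lemma strict_pref_asym: "strict_pref p \<Longrightarrow> p x y \<Longrightarrow> \<not> p y x"
  using strict_pref_irrefl strict_pref_trans by metis

lemma weak_refl [simp]: "weak p x x"
  by (simp add: weak_def)

lemma weak_antisym: "strict_pref p \<Longrightarrow> weak p x y \<Longrightarrow> weak p y x \<Longrightarrow> x = y"
  unfolding weak_def using strict_pref_asym by metis

lemma weak_trans: "strict_pref p \<Longrightarrow> weak p x y \<Longrightarrow> weak p y z \<Longrightarrow> weak p x z"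
  unfolding weak_def using strict_pref_trans by metis

lemma weak_not_strict_rev: "strict_pref p \<Longrightarrow> weak p x y \<Longrightarrow> \<not> p y x"
  unfolding weak_def using strict_pref_asym strict_pref_irrefl by metis

lemma strict_pref_valid_profile: "valid_profile P \<Longrightarrow> strict_pref (P a)"
  by (simp add: valid_profile_def)

lemma valid_profile_upd: "valid_profile P \<Longrightarrow> strict_pref q \<Longrightarrow> valid_profile (P(a := q))"
  by (simp add: valid_profile_def)

lemma best_eqI:
  assumes "strict_pref p" "x \<in> \<Omega>" "\<And>y. y \<in> \<Omega> \<Longrightarrow> weak p x y"
  shows "best p \<Omega> = x"
  unfolding best_def
proof (rule the_equality)
  show "x \<in> \<Omega> \<and> (\<forall>y\<in>\<Omega>. y \<noteq> x \<longrightarrow> p x y)"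
    using assms by (auto simp: weak_def)
next
  fix z assume "z \<in> \<Omega> \<and> (\<forall>y\<in>\<Omega>. y \<noteq> z \<longrightarrow> p z y)"
  then show "z = x"
    using assms weak_not_strict_rev by metis
qed

lemma best_in_weak:
  fixes \<Omega> :: "'o::finite set"
  assumes p: "strict_pref p" and "\<Omega> \<noteq> {}"
  shows "best p \<Omega> \<in> \<Omega> \<and> (\<forall>y\<in>\<Omega>. weak p (best p \<Omega>) y)"
proof -
  have "\<exists>x\<in>\<Omega>. \<forall>y\<in>\<Omega>. weak p x y"
    using finite \<open>\<Omega> \<noteq> {}\<close>
  proof (induction rule: finite_ne_induct)
    case (insert z F)
    then obtain x where x: "x \<in> F" "\<forall>y\<in>F. weak p x y" by blast
    show ?case
    proof (cases "p z x")
      case True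
      then show ?thesis
        using x weak_trans[OF p] by (auto simp: weak_def)
    next
      case False
      then show ?thesis
        using x strict_pref_total[OF p, of x z] by (auto simp: weak_def)
    qed
  qed simp
  then show ?thesis
    using best_eqI[OF p] by metis
qed

lemma best_in: "strict_pref p \<Longrightarrow> (\<Omega>::'o::finite set) \<noteq> {} \<Longrightarrow> best p \<Omega> \<in> \<Omega>"
  using best_in_weak by blast

lemma best_weak: "strict_pref p \<Longrightarrow> (\<Omega>::'o::finite set) \<noteq> {} \<Longrightarrow> y \<in> \<Omega> \<Longrightarrow> weak p (best p \<Omega>) y"
  using best_in_weak by blast

lemma best_cong:
  assumes "strict_pref p" "strict_pref q" "(\<Omega>::'o::finite set) \<noteq> {}"
    and "\<And>x y. x \<in> \<Omega> \<Longrightarrow> y \<in> \<Omega> \<Longrightarrow> p x y = q x y"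
  shows "best p \<Omega> = best q \<Omega>"
proof (rule sym, rule best_eqI[OF assms(2)])
  show "best p \<Omega> \<in> \<Omega>"
    using best_in_weak[OF assms(1,3)] by blast
  show "weak q (best p \<Omega>) y" if "y \<in> \<Omega>" for y
    using best_in_weak[OF assms(1,3)] assms(4) that by (auto simp: weak_def)
qed

lemma valid_strategy_straightforward:
  "strict_pref p \<Longrightarrow> valid_strategy (straightforward p :: 'o::finite strategy)"
  unfolding valid_strategy_def straightforward_def using best_in by blast

section \<open>Promoting objects to the top\<close>

definition promote :: "'o \<Rightarrow> 'o pref \<Rightarrow> 'o pref" where
  "promote c p = (\<lambda>x y. (x = c \<and> y \<noteq> c) \<or> (x \<noteq> c \<and> y \<noteq> c \<and> p x y))"

text \<open>The first element of the list ends up on top.\<close>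
definition promote_list :: "'o list \<Rightarrow> 'o pref \<Rightarrow> 'o pref" where
  "promote_list cs p = foldr promote cs p"

lemma promote_list_Nil [simp]: "promote_list [] p = p"
  by (simp add: promote_list_def)

lemma promote_list_Cons [simp]: "promote_list (c # cs) p = promote c (promote_list cs p)"
  by (simp add: promote_list_def)

lemma promote_list_append: "promote_list (cs @ ds) p = promote_list cs (promote_list ds p)"
  by (simp add: promote_list_def)

lemma strict_pref_promote: "strict_pref p \<Longrightarrow> strict_pref (promote c p)"
  unfolding strict_pref_def promote_def by blast

lemma strict_pref_promote_list: "strict_pref p \<Longrightarrow> strict_pref (promote_list cs p)"
  by (induction cs) (auto simp: strict_pref_promote)

lemma promote_idem: "promote c (promote c p) = promote c p"
  unfolding promote_def by (intro ext) auto

lemma weak_promote_top: "weak (promote c p) x c \<Longrightarrow> x = c"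
  unfolding weak_def promote_def by blast

lemma promote_list_outside: "x \<notin> set cs \<Longrightarrow> y \<notin> set cs \<Longrightarrow> promote_list cs p x y = p x y"
  by (induction cs) (auto simp: promote_def)

lemma promote_list_inside: "x \<in> set cs \<or> y \<in> set cs \<Longrightarrow> promote_list cs p x y = promote_list cs q x y"
  by (induction cs) (auto simp: promote_def)

lemma promote_list_cases: "promote_list cs p x y \<Longrightarrow> x \<in> set cs \<or> (y \<notin> set cs \<and> p x y)"
  by (induction cs) (auto simp: promote_def)

lemma promote_list_above:
  assumes "c \<notin> set cs" "y \<notin> set cs" "y \<noteq> c"
  shows "promote_list (cs @ c # ds) p c y"
  using assms by (simp add: promote_list_append promote_list_outside) (simp add: promote_def)

lemma best_promote_list:
  assumes "strict_pref p" "(\<Omega>::'o::finite set) \<noteq> {}" "\<Omega> \<inter> set cs = {}"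
  shows "best (promote_list cs p) \<Omega> = best p \<Omega>"
  using assms promote_list_outside[of _ cs _ p]
  by (intro best_cong[OF strict_pref_promote_list[OF assms(1)] assms(1,2)]) blast

definition top_pref :: "'o::countable \<Rightarrow> 'o pref" where
  "top_pref n = promote n (\<lambda>x y. to_nat x < to_nat y)"

lemma strict_pref_top_pref: "strict_pref (top_pref n)"
  unfolding top_pref_def
  by (rule strict_pref_promote) (auto simp: strict_pref_def, metis linorder_neqE_nat to_nat_split)

lemma promote_top_pref: "promote n (top_pref n) = top_pref n"
  unfolding top_pref_def by (rule promote_idem)

lemma best_top_pref: "n \<in> \<Omega> \<Longrightarrow> best (top_pref n) \<Omega> = n"
  by (rule best_eqI[OF strict_pref_top_pref]) (auto simp: weak_def top_pref_def promote_def)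

lemma weak_top_pref: "weak (top_pref n) x n \<Longrightarrow> x = n"
  unfolding top_pref_def by (rule weak_promote_top)

lemma weak_promote_list_top_pref: "weak (promote_list cs (top_pref n)) x n \<Longrightarrow> x = n \<or> x \<in> set cs"
  using promote_list_cases[of cs "top_pref n" x n] weak_top_pref unfolding weak_def by blast

abbreviation choices :: "'o chist \<Rightarrow> 'o list" where
  "choices h \<equiv> map snd h"

definition wf_chist :: "'o chist \<Rightarrow> bool" where
  "wf_chist h \<longleftrightarrow> (\<forall>(M, c) \<in> set h. c \<in> M) \<and> sorted_wrt (\<lambda>(M, c) (M', _). M' \<subseteq> M - {c}) h"

lemma wf_chist_Nil [simp]: "wf_chist []"
  by (simp add: wf_chist_def)

lemma wf_chist_choice_in_menu: "wf_chist h \<Longrightarrow> (M, c) \<in> set h \<Longrightarrow> c \<in> M"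
  unfolding wf_chist_def by blast

lemma wf_chist_appendD:
  assumes "wf_chist (h @ e)" "(M, c) \<in> set h" "(M', c') \<in> set e"
  shows "M' \<subseteq> M - {c}"
  using assms unfolding wf_chist_def sorted_wrt_append by fastforce

lemma wf_chist_snoc:
  assumes h: "wf_chist h" and "c \<in> M" and M: "h \<noteq> [] \<Longrightarrow> M \<subseteq> fst (last h) - {snd (last h)}"
  shows "wf_chist (h @ [(M, c)])"
proof -
  have "M \<subseteq> M0 - {c0}" if in_h: "(M0, c0) \<in> set h" for M0 c0
  proof -
    obtain xs x where hx: "h = xs @ [x]" using in_h by (cases h rule: rev_cases) auto
    have "(M0, c0) = x \<or> fst x \<subseteq> M0 - {c0}"
      using wf_chist_appendD[of xs "[x]" M0 c0 "fst x" "snd x"] h hx in_h by auto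
    then show ?thesis using M hx by auto
  qed
  then show ?thesis
    using assms unfolding wf_chist_def sorted_wrt_append by auto
qed

lemma wf_chist_disjoint_choices:
  assumes "wf_chist (h @ e)" "(M, c) \<in> set e"
  shows "M \<inter> set (choices h) = {}"
  using wf_chist_appendD[OF assms(1) _ assms(2)] by force

lemma wf_chist_final_choice_notin:
  assumes "wf_chist (h @ e)" "e \<noteq> []"
  shows "snd (last (h @ e)) \<notin> set (choices h)"
proof -
  have "last (h @ e) \<in> set e" using assms(2) by simp
  then show ?thesis
    using wf_chist_disjoint_choices[OF assms(1)] wf_chist_choice_in_menu[OF assms(1)]
    by (metis Un_iff disjoint_iff prod.collapse set_append)
qed

lemma wf_chist_last_menu_choices:
  assumes "wf_chist h" "h \<noteq> []"
  shows "set (choices h) \<inter> fst (last h) = {snd (last h)}"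
proof -
  obtain xs M c where h: "h = xs @ [(M, c)]" using assms(2) by (cases h rule: rev_cases) auto
  have "M \<inter> set (choices xs) = {}"
    using wf_chist_disjoint_choices[of xs "[(M, c)]" M c] assms(1) h by simp
  moreover have "c \<in> M"
    using wf_chist_choice_in_menu[OF assms(1)] h by simp
  ultimately show ?thesis
    using h by auto
qed

lemma wf_chist_final_choice_in_last_menu:
  assumes "wf_chist (h @ e)" "h \<noteq> []"
  shows "snd (last (h @ e)) \<in> fst (last h)"
proof (cases "e = []")
  case True
  then show ?thesis
    using wf_chist_choice_in_menu[OF assms(1)] assms(2) by (metis append_Nil2 last_in_set prod.collapse)
next
  case False
  have "snd (last e) \<in> fst (last e)"
    using wf_chist_choice_in_menu[OF assms(1)] False by (metis Un_iff last_in_set prod.collapse set_append)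
  moreover have "fst (last e) \<subseteq> fst (last h) - {snd (last h)}"
    using wf_chist_appendD[OF assms(1), of "fst (last h)" "snd (last h)" "fst (last e)" "snd (last e)"]
      assms(2) False by simp
  ultimately show ?thesis using False by auto
qed

lemma consistent_promote_choices:
  assumes "wf_chist h"
  shows "consistent (promote_list (choices h) p) h"
  unfolding consistent_def
proof (intro ballI, clarify)
  fix M c y assume "(M, c) \<in> set h" "y \<in> M"
  then obtain xs ys where h: "h = xs @ (M, c) # ys" by (metis split_list)
  have c: "c \<in> M" using wf_chist_choice_in_menu[OF assms] h by simp
  have "M \<inter> set (choices xs) = {}"
    using wf_chist_disjoint_choices[of xs "(M, c) # ys" M c] assms h by simp
  then show "weak (promote_list (choices h) p) c y"
    using promote_list_above[of c "choices xs" y "choices ys" p] c \<open>y \<in> M\<close> h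
    by (cases "y = c") (auto simp: weak_def)
qed

lemma consistent_append: "consistent p (h @ e) \<longleftrightarrow> consistent p h \<and> consistent p e"
  unfolding consistent_def by auto

definition valid_strategies :: "('a \<Rightarrow> 'o strategy) \<Rightarrow> bool" where
  "valid_strategies \<sigma> \<longleftrightarrow> (\<forall>i. valid_strategy (\<sigma> i))"

lemma valid_strategies_upd:
  "valid_strategies \<sigma> \<Longrightarrow> valid_strategy \<sigma>' \<Longrightarrow> valid_strategies (\<sigma>(a := \<sigma>'))"
  by (simp add: valid_strategies_def)

lemma mstep_cong:
  "(\<And>i. S h i \<noteq> {} \<Longrightarrow> \<sigma> i (h i) (S h i) = \<sigma>' i (h i) (S h i)) \<Longrightarrow> mstep S \<sigma> h = mstep S \<sigma>' h"
  unfolding mstep_def by (intro ext) auto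

lemma prefix_mstep: "prefix (h i) (mstep S \<sigma> h i)"
  by (simp add: mstep_def)

lemma runs_to_unique: "runs_to S \<sigma> h h1 \<Longrightarrow> runs_to S \<sigma> h h2 \<Longrightarrow> h1 = h2"
proof (induction h h1 arbitrary: h2 rule: runs_to.induct)
  case (stop h)
  from stop.prems show ?case
    by (cases rule: runs_to.cases) (use stop.hyps in simp_all)
next
  case (go h h')
  from go.prems show ?case
  proof (cases rule: runs_to.cases)
    case stop then show ?thesis using go.hyps by simp
  next
    case go then show ?thesis using \<open>\<And>h2. runs_to S \<sigma> (mstep S \<sigma> h) h2 \<Longrightarrow> h' = h2\<close> by blast
  qed
qed

lemma outcome_eqI:
  assumes "runs_to S \<sigma> h h'"
  shows "outcome S \<sigma> h a = snd (last (h' a))"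
proof -
  have "(THE g. runs_to S \<sigma> h g) = h'"
    by (rule the_equality) (use assms runs_to_unique in blast)+
  then show ?thesis unfolding outcome_def by simp
qed

lemma runs_to_cong:
  assumes "runs_to S \<sigma> h h'" "I h"
    and "\<And>g. I g \<Longrightarrow> \<not> (\<forall>i. S g i = {}) \<Longrightarrow> I (mstep S \<sigma> g) \<and> mstep S \<sigma>' g = mstep S \<sigma> g"
  shows "runs_to S \<sigma>' h h'"
  using assms(1,2)
proof (induction h h' rule: runs_to.induct)
  case (stop h) then show ?case by (simp add: runs_to.stop)
next
  case (go h h')
  then show ?case using assms(3) runs_to.go[of S h \<sigma>'] by simp
qed

lemma prefix_runs_to: "runs_to S \<sigma> h h' \<Longrightarrow> prefix (h i) (h' i)"
  by (induction h h' rule: runs_to.induct) (auto intro: prefix_order.trans prefix_mstep)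

lemma runs_to_terminal: "runs_to S \<sigma> h h' \<Longrightarrow> S h' i = {}"
  by (induction h h' rule: runs_to.induct) auto

lemma runs_to_idle_agent:
  assumes "runs_to S \<sigma> h h'" "h' a = h a"
  shows "runs_to S (\<sigma>(a := \<sigma>')) h h'"
  using assms
proof (induction h h' rule: runs_to.induct)
  case (stop h) then show ?case by (simp add: runs_to.stop)
next
  case (go h h')
  have "prefix (h a) (mstep S \<sigma> h a)" "prefix (mstep S \<sigma> h a) (h' a)"
    by (rule prefix_mstep, rule prefix_runs_to[OF go.hyps(2)])
  then have idle: "mstep S \<sigma> h a = h a"
    using go.prems prefix_order.antisym by metis
  then have "S h a = {}"
    unfolding mstep_def by (metis append_self_conv list.distinct(1))
  then have "mstep S (\<sigma>(a := \<sigma>')) h = mstep S \<sigma> h"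
    by (intro mstep_cong) auto
  moreover have "runs_to S (\<sigma>(a := \<sigma>')) (mstep S \<sigma> h) h'"
    using go.prems idle by (intro go.IH) simp
  ultimately show ?case
    using runs_to.go[where S = S and h = h, OF go.hyps(1)] by metis
qed

lemma runs_to_eq_if_idle:
  assumes "runs_to S \<sigma> h h1" "runs_to S (\<sigma>(a := \<sigma>')) h h2" "h1 a = h a \<or> h2 a = h a"
  shows "h1 = h2"
  using assms(3)
proof
  assume "h1 a = h a"
  then show ?thesis
    using runs_to_idle_agent[OF assms(1)] assms(2) runs_to_unique by blast
next
  assume "h2 a = h a"
  then have "runs_to S ((\<sigma>(a := \<sigma>'))(a := \<sigma> a)) h h2"
    by (rule runs_to_idle_agent[OF assms(2)])
  then show ?thesis
    using assms(1) runs_to_unique by simp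
qed

text \<open>Termination measure: each move replaces the mover's last menu by a proper subset.\<close>
definition hist_size :: "('a::finite, 'o::finite) chistA \<Rightarrow> nat" where
  "hist_size h = (\<Sum>i\<in>UNIV. if h i = [] then Suc (card (UNIV::'o set)) else card (fst (last (h i))))"

locale pao_mechanism =
  fixes S :: "('a::finite, 'o::finite) menufun"
  assumes PAO: "is_PAO S"
begin

lemma menu_subset_last_menu:
  "reachable S h \<Longrightarrow> h i \<noteq> [] \<Longrightarrow> S h i \<subseteq> fst (last (h i)) - {snd (last (h i))}"
  using PAO unfolding is_PAO_def by blast

lemma reachable_wf_chist: "reachable S h \<Longrightarrow> wf_chist (h i)"
proof (induction rule: reachable.induct)
  case start then show ?case by (simp add: empty_hist_def)
next
  case (step h c)
  show ?case
  proof (cases "S h i = {}")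
    case False
    then show ?thesis
      using wf_chist_snoc[OF step.IH _ menu_subset_last_menu[OF step.hyps(1)]] step.hyps(3) by simp
  qed (simp add: step.IH)
qed

lemma menu_disjoint_choices:
  assumes r: "reachable S h"
  shows "S h i \<inter> set (choices (h i)) = {}"
proof (cases "S h i = {}")
  case False
  then obtain c where "c \<in> S h i" by blast
  then have "wf_chist (h i @ [(S h i, c)])"
    by (rule wf_chist_snoc[OF reachable_wf_chist[OF r] _ menu_subset_last_menu[OF r]])
  then show ?thesis
    using wf_chist_disjoint_choices[of "h i" "[(S h i, c)]" "S h i" c] by simp
qed simp

lemma reachable_mstep:
  "reachable S h \<Longrightarrow> \<not> (\<forall>i. S h i = {}) \<Longrightarrow> valid_strategies \<sigma> \<Longrightarrow> reachable S (mstep S \<sigma> h)"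
  unfolding mstep_def valid_strategies_def valid_strategy_def
  by (rule reachable.step[where c = "\<lambda>i. \<sigma> i (h i) (S h i)"]) auto

lemma hist_size_mstep_less:
  assumes r: "reachable S h" and moves: "\<not> (\<forall>i. S h i = {})"
  shows "hist_size (mstep S \<sigma> h) < hist_size h"
proof -
  let ?f = "\<lambda>g i. if g i = [] then Suc (card (UNIV::'o set)) else card (fst (last (g i)))"
  let ?h = "mstep S \<sigma> h"
  have less: "?f ?h i < ?f h i" if "S h i \<noteq> {}" for i
  proof (cases "h i = []")
    case True
    have "card (S h i) \<le> card (UNIV::'o set)" by (rule card_mono) auto
    then show ?thesis using True that by (simp add: mstep_def)
  next
    case False
    have "snd (last (h i)) \<in> fst (last (h i))"
      using wf_chist_choice_in_menu[OF reachable_wf_chist[OF r]] False by (metis last_in_set prod.collapse)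
    then have "S h i \<subset> fst (last (h i))"
      using menu_subset_last_menu[OF r False] by blast
    then have "card (S h i) < card (fst (last (h i)))" by (rule psubset_card_mono[rotated]) simp
    then show ?thesis using False that by (simp add: mstep_def)
  qed
  have "sum (?f ?h) UNIV < sum (?f h) UNIV"
  proof (rule sum_strict_mono_ex1)
    show "\<forall>i\<in>UNIV. ?f ?h i \<le> ?f h i"
      using less by (metis (no_types, lifting) less_imp_le mstep_def order_refl)
    show "\<exists>i\<in>UNIV. ?f ?h i < ?f h i"
      using less moves by blast
  qed simp
  then show ?thesis unfolding hist_size_def .
qed

lemma runs_to_exists: "reachable S h \<Longrightarrow> valid_strategies \<sigma> \<Longrightarrow> \<exists>h'. runs_to S \<sigma> h h'"
proof (induction "hist_size h" arbitrary: h rule: less_induct)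
  case less
  show ?case
  proof (cases "\<forall>i. S h i = {}")
    case True then show ?thesis using runs_to.stop by blast
  next
    case False
    then obtain h' where "runs_to S \<sigma> (mstep S \<sigma> h) h'"
      using less reachable_mstep hist_size_mstep_less by blast
    then show ?thesis using runs_to.go[where S = S and h = h, OF False] by blast
  qed
qed

lemma reachable_runs_to: "runs_to S \<sigma> h h' \<Longrightarrow> reachable S h \<Longrightarrow> valid_strategies \<sigma> \<Longrightarrow> reachable S h'"
  by (induction h h' rule: runs_to.induct) (auto intro: reachable_mstep)

lemma final_choice_notin_choices:
  assumes run: "runs_to S \<sigma> h h'" and "reachable S h" "valid_strategies \<sigma>" and moved: "h' a \<noteq> h a"
  shows "snd (last (h' a)) \<notin> set (choices (h a))"
proof -
  obtain e where e: "h' a = h a @ e"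
    using prefix_runs_to[OF run] by (auto elim: prefixE)
  moreover have "wf_chist (h' a)"
    using reachable_wf_chist reachable_runs_to[OF run] assms(2,3) by blast
  ultimately show ?thesis
    using wf_chist_final_choice_notin moved by fastforce
qed

lemma consistent_runs_to:
  assumes "runs_to S \<sigma> h h'" "reachable S h" "valid_strategies \<sigma>" "consistent q (h b)"
    and "\<And>g. reachable S g \<Longrightarrow> prefix (h b) (g b) \<Longrightarrow> S g b \<noteq> {} \<Longrightarrow>
           \<forall>y\<in>S g b. weak q (\<sigma> b (g b) (S g b)) y"
  shows "consistent q (h' b)"
  using assms(1-5)
proof (induction h h' rule: runs_to.induct)
  case (stop h) then show ?case by simp
next
  case (go h h')
  have "consistent q (mstep S \<sigma> h b)"
    using go.prems(3) go.prems(4)[OF go.prems(1) prefix_order.refl]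
    by (cases "S h b = {}") (auto simp: mstep_def consistent_append consistent_def)
  moreover have "prefix (h b) (mstep S \<sigma> h b)" by (rule prefix_mstep)
  moreover have "reachable S (mstep S \<sigma> h)"
    using reachable_mstep go.hyps(1) go.prems(1,2) by blast
  ultimately show ?case
    using go.IH go.prems(2,4) prefix_order.trans by blast
qed

end

section \<open>Straightforward play and lifted profiles\<close>

definition straightforward_profile :: "('a, 'o) profile \<Rightarrow> 'a \<Rightarrow> 'o strategy" where
  "straightforward_profile P = (\<lambda>b. straightforward (P b))"

definition lift_profile :: "('a, 'o) chistA \<Rightarrow> ('a, 'o) profile \<Rightarrow> ('a, 'o) profile" where
  "lift_profile h P = (\<lambda>i. promote_list (choices (h i)) (P i))"

definition final_choices :: "('a, 'o) chistA \<Rightarrow> 'a \<Rightarrow> 'o" where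
  "final_choices h = (\<lambda>i. snd (last (h i)))"

lemma straightforward_profile_apply: "straightforward_profile P i g M = best (P i) M"
  by (simp add: straightforward_profile_def straightforward_def)

lemma valid_strategies_straightforward:
  "valid_profile (P :: ('a, 'o::finite) profile) \<Longrightarrow> valid_strategies (straightforward_profile P)"
  unfolding valid_strategies_def straightforward_profile_def valid_profile_def
  using valid_strategy_straightforward by blast

lemma valid_lift_profile: "valid_profile P \<Longrightarrow> valid_profile (lift_profile h P)"
  unfolding valid_profile_def lift_profile_def using strict_pref_promote_list by blast

lemma lift_profile_upd:
  "lift_profile h (P(j := q)) = (lift_profile h P)(j := promote_list (choices (h j)) q)"
  unfolding lift_profile_def by (intro ext) simp

lemma lift_profile_mstep:
  "lift_profile (mstep S \<sigma> h) P =
     lift_profile h (\<lambda>i. if S h i = {} then P i else promote (\<sigma> i (h i) (S h i)) (P i))"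
  unfolding lift_profile_def mstep_def by (intro ext) (simp add: promote_list_append)

context pao_mechanism
begin

lemma lift_profile_consistent:
  "reachable S h \<Longrightarrow> valid_profile P \<Longrightarrow> lift_profile h P \<in> consistent_profiles h"
  unfolding consistent_profiles_def lift_profile_def
  using valid_lift_profile[of P h] consistent_promote_choices reachable_wf_chist
  by (auto simp: lift_profile_def)

lemma best_lift_profile:
  assumes "reachable S g" "prefix (h i) (g i)" "valid_profile P" "S g i \<noteq> {}"
  shows "best (lift_profile h P i) (S g i) = best (P i) (S g i)"
proof -
  have "set (choices (h i)) \<subseteq> set (choices (g i))"
    using assms(2) by (auto elim!: prefixE)
  then have "S g i \<inter> set (choices (h i)) = {}"
    using menu_disjoint_choices[OF assms(1), of i] by blast
  then show ?thesis
    unfolding lift_profile_def by (rule best_promote_list[OF strict_pref_valid_profile[OF assms(3)] assms(4)])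
qed

lemma runs_to_lift_profile:
  assumes r: "reachable S h" and P: "valid_profile P"
    and run: "runs_to S (straightforward_profile P) h h'"
  shows "runs_to S (straightforward_profile (lift_profile h P)) h h'"
proof -
  let ?\<sigma> = "straightforward_profile P"
  let ?I = "\<lambda>g. reachable S g \<and> (\<forall>i. prefix (h i) (g i))"
  show ?thesis
  proof (rule runs_to_cong[OF run, where I = ?I])
    fix g assume I: "?I g" and moves: "\<not> (\<forall>i. S g i = {})"
    have "reachable S (mstep S ?\<sigma> g)"
      using reachable_mstep I moves valid_strategies_straightforward[OF P] by blast
    moreover have "prefix (h i) (mstep S ?\<sigma> g i)" for i
      using I prefix_mstep prefix_order.trans by metis
    moreover have "mstep S (straightforward_profile (lift_profile h P)) g = mstep S ?\<sigma> g"
    proof (rule mstep_cong)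
      fix i assume "S g i \<noteq> {}"
      then show "straightforward_profile (lift_profile h P) i (g i) (S g i) = ?\<sigma> i (g i) (S g i)"
        using I best_lift_profile[OF _ _ P] by (simp add: straightforward_profile_apply)
    qed
    ultimately show "?I (mstep S ?\<sigma> g) \<and> mstep S (straightforward_profile (lift_profile h P)) g = mstep S ?\<sigma> g"
      by blast
  qed (use r in simp)
qed

lemma consistent_lift_profile_runs_to:
  assumes run: "runs_to S \<sigma> h h'" and r: "reachable S h" and P: "valid_profile P"
    and vs: "valid_strategies \<sigma>" and b: "\<sigma> b = straightforward (P b)"
  shows "consistent (lift_profile h P b) (h' b)"
proof (rule consistent_runs_to[OF run r vs])
  show "consistent (lift_profile h P b) (h b)"
    using lift_profile_consistent[OF r P] by (simp add: consistent_profiles_def)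
next
  fix g assume g: "reachable S g" "prefix (h b) (g b)" "S g b \<noteq> {}"
  have "strict_pref (lift_profile h P b)"
    using valid_lift_profile[OF P] by (rule strict_pref_valid_profile)
  then have "\<forall>y\<in>S g b. weak (lift_profile h P b) (best (lift_profile h P b) (S g b)) y"
    using best_weak g(3) by blast
  then show "\<forall>y\<in>S g b. weak (lift_profile h P b) (\<sigma> b (g b) (S g b)) y"
    using best_lift_profile[where h = h and i = b, OF g(1,2) P g(3)] b by (simp add: straightforward_def)
qed

end

locale pao_sequentialization = pao_mechanism S for S :: "('a::finite, 'o::finite) menufun" +
  fixes \<phi> :: "('a, 'o) rule"
  assumes seq: "sequentializes S \<phi>"
begin

lemma runs_to_from_start:
  assumes "reachable S h"
  shows "P \<in> consistent_profiles h \<Longrightarrow> runs_to S (straightforward_profile P) h h'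
    \<Longrightarrow> runs_to S (straightforward_profile P) empty_hist h'"
  using assms
proof (induction rule: reachable.induct)
  case (step h c)
  let ?h = "\<lambda>i. if S h i = {} then h i else h i @ [(S h i, c i)]"
  have P: "valid_profile P" and cons: "consistent (P i) (?h i)" for i
    using step.prems(1) by (auto simp: consistent_profiles_def)
  have "P \<in> consistent_profiles h"
    using P cons by (fastforce simp: consistent_profiles_def consistent_append split: if_splits)
  moreover have "c i = best (P i) (S h i)" if moves: "S h i \<noteq> {}" for i
  proof (rule sym, rule best_eqI[OF strict_pref_valid_profile[OF P]])
    show "c i \<in> S h i" using step.hyps(3) moves by blast
    show "weak (P i) (c i) y" if "y \<in> S h i" for y
      using cons[of i] moves that by (simp add: consistent_append consistent_def)
  qed
  then have "?h = mstep S (straightforward_profile P) h"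
    unfolding mstep_def straightforward_profile_apply by (intro ext) auto
  then have "runs_to S (straightforward_profile P) h h'"
    using runs_to.go[where S = S and h = h, OF step.hyps(2)] step.prems(2) by simp
  ultimately show ?case
    using step.IH by blast
qed simp

lemma rule_eq_final_choices:
  assumes "reachable S h" "P \<in> consistent_profiles h" "runs_to S (straightforward_profile P) h h'"
  shows "\<phi> P = final_choices h'"
proof
  fix a
  have "valid_profile P" using assms(2) by (simp add: consistent_profiles_def)
  then have "\<phi> P a = outcome S (straightforward_profile P) empty_hist a"
    using seq unfolding sequentializes_def straightforward_profile_def by simp
  also have "\<dots> = final_choices h' a"
    using outcome_eqI[OF runs_to_from_start[OF assms]] by (simp add: final_choices_def)
  finally show "\<phi> P a = final_choices h' a" .
qed

lemma rule_lift_profile_eq_final_choices: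
  assumes "reachable S h" "valid_profile P" "runs_to S (straightforward_profile P) h h'"
  shows "\<phi> (lift_profile h P) = final_choices h'"
  by (rule rule_eq_final_choices[OF assms(1) lift_profile_consistent[OF assms(1,2)] runs_to_lift_profile[OF assms]])

lemma rule_lift_profile_consistent:
  assumes r: "reachable S h" and P: "P \<in> consistent_profiles h"
  shows "\<phi> (lift_profile h P) = \<phi> P"
proof -
  have vP: "valid_profile P" using P by (simp add: consistent_profiles_def)
  obtain h' where "runs_to S (straightforward_profile P) h h'"
    using runs_to_exists[OF r valid_strategies_straightforward[OF vP]] by blast
  then show ?thesis
    using rule_lift_profile_eq_final_choices[OF r vP] rule_eq_final_choices[OF r P] by simp
qed

lemma rule_in_last_menu:
  assumes r: "reachable S h" and ne: "h i \<noteq> []" and P: "P \<in> consistent_profiles h"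
  shows "\<phi> P i \<in> fst (last (h i))"
proof -
  have vP: "valid_profile P" using P by (simp add: consistent_profiles_def)
  obtain h' where run: "runs_to S (straightforward_profile P) h h'"
    using runs_to_exists[OF r valid_strategies_straightforward[OF vP]] by blast
  obtain e where "h' i = h i @ e"
    using prefix_runs_to[OF run] by (auto elim: prefixE)
  moreover have "wf_chist (h' i)"
    using reachable_wf_chist reachable_runs_to[OF run r valid_strategies_straightforward[OF vP]] by blast
  ultimately show ?thesis
    using wf_chist_final_choice_in_last_menu ne rule_eq_final_choices[OF r P run]
    by (simp add: final_choices_def)
qed

text \<open>The hypothesis on later histories is bounded by hist_size so that, in the uniqueness
  proof, it can be discharged by the induction hypothesis.\<close>
lemma outcome_mstep:
  assumes r: "reachable S h" and moves: "\<not> (\<forall>i. S h i = {})" and vs: "valid_strategies \<sigma>"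
    and P: "valid_profile P"
    and later: "\<And>g i. reachable S g \<Longrightarrow> hist_size g < hist_size h \<Longrightarrow>
      (\<forall>k. prefix (mstep S \<sigma> h k) (g k)) \<Longrightarrow> S g i \<noteq> {} \<Longrightarrow> \<sigma> i (g i) (S g i) = best (P i) (S g i)"
  shows "outcome S \<sigma> h =
    \<phi> (lift_profile h (\<lambda>i. if S h i = {} then P i else promote (\<sigma> i (h i) (S h i)) (P i)))"
proof -
  let ?h = "mstep S \<sigma> h" and ?\<tau> = "straightforward_profile P"
  let ?I = "\<lambda>g. reachable S g \<and> hist_size g < hist_size h \<and> (\<forall>k. prefix (?h k) (g k))"
  have rh: "reachable S ?h"
    by (rule reachable_mstep[OF r moves vs])
  have vt: "valid_strategies ?\<tau>"
    by (rule valid_strategies_straightforward[OF P])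
  obtain h' where run: "runs_to S ?\<tau> ?h h'"
    using runs_to_exists[OF rh vt] by blast
  have "runs_to S \<sigma> ?h h'"
  proof (rule runs_to_cong[OF run, where I = ?I])
    show "?I ?h"
      using rh hist_size_mstep_less[OF r moves] by simp
  next
    fix g assume I: "?I g" and g_moves: "\<not> (\<forall>i. S g i = {})"
    have "reachable S (mstep S ?\<tau> g)"
      using reachable_mstep[OF _ g_moves vt] I by blast
    moreover have "hist_size (mstep S ?\<tau> g) < hist_size h"
      using hist_size_mstep_less[OF _ g_moves, of ?\<tau>] I by fastforce
    moreover have "prefix (?h k) (mstep S ?\<tau> g k)" for k
      using I prefix_mstep prefix_order.trans by metis
    moreover have "mstep S \<sigma> g = mstep S ?\<tau> g"
    proof (rule mstep_cong)
      fix i assume "S g i \<noteq> {}"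
      then show "\<sigma> i (g i) (S g i) = ?\<tau> i (g i) (S g i)"
        using later I by (simp add: straightforward_profile_apply)
    qed
    ultimately show "?I (mstep S ?\<tau> g) \<and> mstep S \<sigma> g = mstep S ?\<tau> g"
      by blast
  qed
  then have "runs_to S \<sigma> h h'"
    by (rule runs_to.go[where S = S and h = h, OF moves])
  then have "outcome S \<sigma> h = final_choices h'"
    using outcome_eqI unfolding final_choices_def by fast
  also have "\<dots> = \<phi> (lift_profile ?h P)"
    using rule_lift_profile_eq_final_choices[OF rh P run] by simp
  finally show ?thesis
    by (simp only: lift_profile_mstep)
qed

end

section \<open>Straightforward play is an equilibrium\<close>

lemma strategy_proofD:
  "strategy_proof \<phi> \<Longrightarrow> valid_profile P \<Longrightarrow> strict_pref p \<Longrightarrow> weak (P a) (\<phi> P a) (\<phi> (P(a := p)) a)"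
  unfolding strategy_proof_def by blast

context pao_sequentialization
begin

lemma rule_deviation_eq_final_choices:
  assumes run: "runs_to S ((straightforward_profile P)(a := \<sigma>')) h h'" and r: "reachable S h"
    and P: "valid_profile P" and \<sigma>': "valid_strategy \<sigma>'"
  shows "\<phi> ((lift_profile h P)(a := promote_list (choices (h' a)) (P a))) = final_choices h'"
proof -
  let ?Q = "(lift_profile h P)(a := promote_list (choices (h' a)) (P a))"
  have vs: "valid_strategies ((straightforward_profile P)(a := \<sigma>'))"
    by (rule valid_strategies_upd[OF valid_strategies_straightforward[OF P] \<sigma>'])
  have r': "reachable S h'"
    by (rule reachable_runs_to[OF run r vs])
  have "?Q \<in> consistent_profiles h'"
    unfolding consistent_profiles_def
  proof (intro CollectI conjI allI)
    show "valid_profile ?Q"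
      by (rule valid_profile_upd[OF valid_lift_profile[OF P]
            strict_pref_promote_list[OF strict_pref_valid_profile[OF P]]])
    fix b
    show "consistent (?Q b) (h' b)"
      using consistent_promote_choices[OF reachable_wf_chist[OF r']]
        consistent_lift_profile_runs_to[OF run r P vs, of b]
      by (cases "b = a") (simp_all add: straightforward_profile_def)
  qed
  moreover have "\<forall>i. S h' i = {}"
    using runs_to_terminal[OF run] by blast
  ultimately show ?thesis
    using rule_eq_final_choices[OF r'] runs_to.stop by blast
qed

text \<open>Strategy-proofness at the lifted profile compares the two final choices under the
  lifted preference of a; unless the two runs coincide, neither final choice is an earlier
  choice of a, so the comparison also holds under her true preference.\<close>
lemma straightforward_best_response:
  assumes SP: "strategy_proof \<phi>" and r: "reachable S h" and P: "valid_profile P"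
    and \<sigma>': "valid_strategy \<sigma>'"
  shows "weak (P a) (outcome S (straightforward_profile P) h a)
                   (outcome S ((straightforward_profile P)(a := \<sigma>')) h a)"
proof -
  let ?\<sigma> = "straightforward_profile P"
  have vs: "valid_strategies ?\<sigma>"
    by (rule valid_strategies_straightforward[OF P])
  have vs': "valid_strategies (?\<sigma>(a := \<sigma>'))"
    by (rule valid_strategies_upd[OF vs \<sigma>'])
  obtain h1 where run1: "runs_to S ?\<sigma> h h1"
    using runs_to_exists[OF r vs] by blast
  obtain h2 where run2: "runs_to S (?\<sigma>(a := \<sigma>')) h h2"
    using runs_to_exists[OF r vs'] by blast
  let ?Q = "lift_profile h P" and ?q = "promote_list (choices (h2 a)) (P a)"
  have "weak (?Q a) (\<phi> ?Q a) (\<phi> (?Q(a := ?q)) a)"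
    by (rule strategy_proofD[OF SP valid_lift_profile[OF P] strict_pref_promote_list[OF strict_pref_valid_profile[OF P]]])
  then have W: "weak (promote_list (choices (h a)) (P a)) (snd (last (h1 a))) (snd (last (h2 a)))"
    unfolding rule_lift_profile_eq_final_choices[OF r P run1] rule_deviation_eq_final_choices[OF run2 r P \<sigma>']
    by (simp add: final_choices_def lift_profile_def)
  show ?thesis
  proof (cases "h1 a = h a \<or> h2 a = h a")
    case True
    then show ?thesis
      using runs_to_eq_if_idle[OF run1 run2] outcome_eqI[OF run1] outcome_eqI[OF run2] by simp
  next
    case False
    then have "snd (last (h1 a)) \<notin> set (choices (h a))" "snd (last (h2 a)) \<notin> set (choices (h a))"
      using final_choice_notin_choices[OF run1 r vs] final_choice_notin_choices[OF run2 r vs'] by blast+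
    then have "weak (P a) (snd (last (h1 a))) (snd (last (h2 a)))"
      using W promote_list_outside unfolding weak_def by metis
    then show ?thesis
      using outcome_eqI[OF run1] outcome_eqI[OF run2] by simp
  qed
qed

lemma perfect_ex_post_eq_straightforward:
  "strategy_proof \<phi> \<Longrightarrow> perfect_ex_post_eq S (\<lambda>a. straightforward)"
  unfolding perfect_ex_post_eq_def
  using straightforward_best_response[unfolded straightforward_profile_def] by blast

end

lemma individually_rationalD:
  "individually_rational null \<phi> \<Longrightarrow> valid_profile P \<Longrightarrow> weak (P a) (\<phi> P a) null"
  unfolding individually_rational_def by blast

lemma resource_monotonicD:
  "resource_monotonic null \<phi> \<Longrightarrow> valid_profile P \<Longrightarrow> strict_pref p \<Longrightarrow> \<phi> (P(j := p)) j = null \<Longrightarrow>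
    i \<noteq> j \<Longrightarrow> weak (P i) (\<phi> (P(j := p)) i) (\<phi> P i)"
  unfolding resource_monotonic_def by blast

lemma monotonic_discoverability_eq:
  assumes "monotonic_discoverability \<phi>" "valid_profile P" "P' \<in> Lset P (\<phi> P')"
  shows "\<phi> P = \<phi> P'"
  using assms unfolding monotonic_discoverability_def by blast

text \<open>Everything ranked above a past choice is a past choice, and among past choices the
  base of the lift is irrelevant.\<close>
lemma Lset_upd_promote_list:
  assumes P: "valid_profile P" and q: "strict_pref q" and Pj: "P j = promote_list cs p"
    and \<mu>: "\<mu> j \<in> set cs"
  shows "P(j := promote_list cs q) \<in> Lset P \<mu>"
proof -
  have above: "x \<in> set cs" if "x \<in> upper (P j) (\<mu> j)" for x
    using that \<mu> promote_list_cases[of cs p x "\<mu> j"] Pj by (auto simp: upper_def weak_def)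
  have "upper (promote_list cs q) (\<mu> j) = upper (P j) (\<mu> j)"
    using promote_list_inside[of _ cs "\<mu> j" p q] \<mu> Pj by (auto simp: upper_def weak_def)
  moreover have "promote_list cs q x y = P j x y" if "x \<in> upper (P j) (\<mu> j)" for x y
    using promote_list_inside[of x cs y q p] above[OF that] Pj by simp
  ultimately show ?thesis
    unfolding Lset_def using valid_profile_upd[OF P strict_pref_promote_list[OF q]] by auto
qed

locale canonical_pao = pao_sequentialization S \<phi> for S :: "('a::finite, 'o::finite) menufun" and \<phi> +
  fixes null :: 'o
  assumes IR: "individually_rational null \<phi>"
    and RM: "resource_monotonic null \<phi>"
    and SP: "strategy_proof \<phi>"
    and MD: "monotonic_discoverability \<phi>"
    and canon: "S = canonical_menu \<phi>"
begin

lemma menu_eq_mu_hist: "S h i \<noteq> {} \<Longrightarrow> S h i = mu_hist \<phi> h i"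
  using canon unfolding canonical_menu_def by (auto split: if_splits)

lemma rule_in_menu:
  assumes moves: "S h i \<noteq> {}" and P: "P \<in> consistent_profiles h"
  shows "\<phi> P i \<in> S h i"
proof -
  have "\<phi> P \<in> rule_hist \<phi> h"
    unfolding rule_hist_def using P by (rule imageI)
  then show ?thesis
    unfolding menu_eq_mu_hist[OF moves] mu_hist_def by (rule imageI)
qed

lemma menu_attained:
  assumes "c \<in> S h i"
  obtains R where "R \<in> consistent_profiles h" "\<phi> R i = c"
proof -
  have "c \<in> mu_hist \<phi> h i"
    using assms menu_eq_mu_hist by blast
  then show ?thesis
    unfolding mu_hist_def rule_hist_def using that by auto
qed

lemma valid_profile_null_top: "valid_profile (\<lambda>_. top_pref null)"
  by (simp add: valid_profile_def strict_pref_top_pref)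

lemma valid_profile_null_top_upd: "valid_profile Y \<Longrightarrow> valid_profile (Y(j := top_pref null))"
  by (rule valid_profile_upd[OF _ strict_pref_top_pref])

text \<open>Individual rationality leaves an agent of null-top type, lifted by her past choices,
  only null or one of these choices, and only her last one lies in her last menu.\<close>
lemma null_top_outcome_cases:
  fixes j :: 'a
  assumes r: "reachable S h" and Y: "valid_profile Y"
  defines "v \<equiv> \<phi> (lift_profile h (Y(j := top_pref null))) j"
  shows "v = null \<or> (h j \<noteq> [] \<and> v = snd (last (h j)))"
proof (cases "v = null")
  case False
  let ?X = "lift_profile h (Y(j := top_pref null))"
  have X: "valid_profile ?X"
    using valid_lift_profile[OF valid_profile_null_top_upd[OF Y]] .
  have "weak (?X j) v null"
    unfolding v_def by (rule individually_rationalD[OF IR X])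
  then have "weak (promote_list (choices (h j)) (top_pref null)) v null"
    by (simp add: lift_profile_def)
  then have v: "v \<in> set (choices (h j))"
    using weak_promote_list_top_pref False by blast
  then have ne: "h j \<noteq> []" by auto
  have "v \<in> fst (last (h j))"
    unfolding v_def by (rule rule_in_last_menu[OF r ne lift_profile_consistent[OF r valid_profile_null_top_upd[OF Y]]])
  then show ?thesis
    using wf_chist_last_menu_choices[OF reachable_wf_chist[OF r] ne] v ne by blast
qed simp

text \<open>Turning agent j into the null-top type hurts nobody else: either j then receives null
  (resource monotonicity), or j keeps her last choice, and then the allocation does not change
  at all (monotonic discoverability).\<close>
lemma null_top_harmless:
  assumes r: "reachable S h" and Y: "valid_profile Y" and ij: "i \<noteq> j"
  shows "weak (lift_profile h Y i) (\<phi> (lift_profile h (Y(j := top_pref null))) i) (\<phi> (lift_profile h Y) i)"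
proof -
  let ?X = "lift_profile h Y" and ?Z = "promote_list (choices (h j)) (top_pref null)"
  have X': "lift_profile h (Y(j := top_pref null)) = ?X(j := ?Z)"
    by (rule lift_profile_upd)
  have X: "valid_profile ?X"
    using valid_lift_profile[OF Y] .
  have Z: "strict_pref ?Z"
    using strict_pref_promote_list strict_pref_top_pref by blast
  from null_top_outcome_cases[OF r Y, of j]
  show ?thesis
  proof
    assume "\<phi> (lift_profile h (Y(j := top_pref null))) j = null"
    then show ?thesis
      using resource_monotonicD[OF RM X Z _ ij] X' by simp
  next
    assume "h j \<noteq> [] \<and> \<phi> (lift_profile h (Y(j := top_pref null))) j = snd (last (h j))"
    then have "\<phi> (?X(j := ?Z)) j \<in> set (choices (h j))"
      using X' by simp
    then have "?X(j := ?Z) \<in> Lset ?X (\<phi> (?X(j := ?Z)))"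
      using Lset_upd_promote_list[OF X strict_pref_top_pref] by (simp add: lift_profile_def)
    then have "\<phi> ?X = \<phi> (?X(j := ?Z))"
      by (rule monotonic_discoverability_eq[OF MD X])
    then show ?thesis
      using X' by simp
  qed
qed

lemma valid_profile_override_null_top:
  "valid_profile Y \<Longrightarrow> valid_profile (override_on Y (\<lambda>_. top_pref null) F)"
  unfolding valid_profile_def override_on_def by (simp add: strict_pref_top_pref)

lemma null_top_override_harmless:
  assumes r: "reachable S h" and Y: "valid_profile Y" and i: "i \<notin> F"
  shows "weak (lift_profile h Y i)
    (\<phi> (lift_profile h (override_on Y (\<lambda>_. top_pref null) F)) i) (\<phi> (lift_profile h Y) i)"
  using finite[of F] i
proof (induction F rule: finite_induct)
  case (insert j F)
  let ?Y = "override_on Y (\<lambda>_. top_pref null) F"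
  have "weak (lift_profile h ?Y i) (\<phi> (lift_profile h (?Y(j := top_pref null))) i) (\<phi> (lift_profile h ?Y) i)"
    using null_top_harmless[OF r valid_profile_override_null_top[OF Y]] insert.prems by simp
  moreover have "lift_profile h ?Y i = lift_profile h Y i"
    using insert.prems by (simp add: lift_profile_def)
  ultimately show ?case
    using insert weak_trans[OF strict_pref_valid_profile[OF valid_lift_profile[OF Y]]]
    by (metis insertCI override_on_insert)
qed simp

lemma null_top_mover_null:
  assumes r: "reachable S h" and Y: "valid_profile Y" and moves: "S h j \<noteq> {}"
  shows "\<phi> (lift_profile h (Y(j := top_pref null))) j = null"
proof -
  have "\<phi> (lift_profile h (Y(j := top_pref null))) j \<in> S h j"
    using rule_in_menu[OF moves lift_profile_consistent[OF r valid_profile_null_top_upd[OF Y]]] .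
  moreover from null_top_outcome_cases[OF r Y, of j]
  have "\<phi> (lift_profile h (Y(j := top_pref null))) j = null \<or>
    \<phi> (lift_profile h (Y(j := top_pref null))) j \<in> set (choices (h j))"
    by auto
  ultimately show ?thesis
    using menu_disjoint_choices[OF r, of j] by blast
qed

text \<open>Resource monotonicity, applied in both directions.\<close>
lemma null_top_swap:
  assumes r: "reachable S h" and Y: "valid_profile Y" and moves: "S h j \<noteq> {}"
    and null: "\<phi> (lift_profile h Y) j = null"
  shows "\<phi> (lift_profile h (Y(j := top_pref null))) = \<phi> (lift_profile h Y)"
proof
  fix i
  let ?X = "lift_profile h Y" and ?X' = "lift_profile h (Y(j := top_pref null))"
  have X: "valid_profile ?X"
    by (rule valid_lift_profile[OF Y])
  have X': "valid_profile ?X'"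
    by (rule valid_lift_profile[OF valid_profile_null_top_upd[OF Y]])
  show "\<phi> ?X' i = \<phi> ?X i"
  proof (cases "i = j")
    case True
    then show ?thesis using null null_top_mover_null[OF r Y moves] by simp
  next
    case False
    have restore: "?X'(j := ?X j) = ?X"
      by (simp add: lift_profile_upd)
    have "weak (?X' i) (\<phi> (?X'(j := ?X j)) i) (\<phi> ?X' i)"
      using resource_monotonicD[OF RM X' strict_pref_valid_profile[OF X, of j] _ False] null restore by simp
    then have "weak (?X' i) (\<phi> ?X i) (\<phi> ?X' i)"
      unfolding restore .
    moreover have "?X' i = ?X i"
      using False by (simp add: lift_profile_def)
    ultimately show ?thesis
      using weak_antisym[OF strict_pref_valid_profile[OF X] null_top_harmless[OF r Y False]] by simp
  qed
qed

lemma null_top_override_unchanged: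
  assumes r: "reachable S h" and Y: "valid_profile Y"
    and F: "\<forall>j\<in>F. S h j \<noteq> {} \<and> \<phi> (lift_profile h Y) j = null"
  shows "\<phi> (lift_profile h (override_on Y (\<lambda>_. top_pref null) F)) = \<phi> (lift_profile h Y)"
  using finite[of F] F
proof (induction F rule: finite_induct)
  case (insert j F)
  let ?Y = "override_on Y (\<lambda>_. top_pref null) F"
  have IH: "\<phi> (lift_profile h ?Y) = \<phi> (lift_profile h Y)"
    using insert by blast
  then have "\<phi> (lift_profile h (?Y(j := top_pref null))) = \<phi> (lift_profile h ?Y)"
    using null_top_swap[OF r valid_profile_override_null_top[OF Y]] insert.prems by simp
  then show ?case
    using IH by (simp only: override_on_insert)
qed simp

text \<open>Some consistent profile gives c to t. Letting t rank c first (strategy-proofness) and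
  turning everybody else into the null-top type can only improve t's assignment, and the
  result still lies in her menu.\<close>
lemma menu_item_promoted:
  assumes r: "reachable S h" and c: "c \<in> S h t" and p: "strict_pref p"
  shows "\<phi> (lift_profile h ((\<lambda>_. top_pref null)(t := promote c p))) t = c"
proof -
  obtain R where R: "R \<in> consistent_profiles h" and Rc: "\<phi> R t = c"
    by (rule menu_attained[OF c])
  have vR: "valid_profile R"
    using R by (simp add: consistent_profiles_def)
  let ?Y = "R(t := promote c p)" and ?q = "promote_list (choices (h t)) (promote c p)"
  let ?Y' = "override_on ?Y (\<lambda>_. top_pref null) (- {t})"
  let ?v = "\<phi> (lift_profile h ?Y') t"
  have Y: "valid_profile ?Y"
    by (rule valid_profile_upd[OF vR strict_pref_promote[OF p]])
  have q: "strict_pref ?q"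
    by (rule strict_pref_promote_list[OF strict_pref_promote[OF p]])
  have Yt: "lift_profile h ?Y t = ?q"
    by (simp add: lift_profile_def)
  have restore: "(lift_profile h ?Y)(t := lift_profile h R t) = lift_profile h R"
    by (intro ext) (simp add: lift_profile_def)
  have "weak (lift_profile h ?Y t) (\<phi> (lift_profile h ?Y) t) (\<phi> ((lift_profile h ?Y)(t := lift_profile h R t)) t)"
    by (rule strategy_proofD[OF SP valid_lift_profile[OF Y] strict_pref_valid_profile[OF valid_lift_profile[OF vR]]])
  then have "weak ?q (\<phi> (lift_profile h ?Y) t) c"
    unfolding Yt restore rule_lift_profile_consistent[OF r R] Rc .
  moreover have "weak (lift_profile h ?Y t) ?v (\<phi> (lift_profile h ?Y) t)"
    by (rule null_top_override_harmless[OF r Y]) simp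
  ultimately have "weak ?q ?v c"
    unfolding Yt using weak_trans[OF q] by blast
  moreover have "?v \<in> S h t"
    using rule_in_menu[OF _ lift_profile_consistent[OF r valid_profile_override_null_top[OF Y]]] c by blast
  ultimately have "weak (promote c p) ?v c"
    using menu_disjoint_choices[OF r, of t] c promote_list_outside[of ?v "choices (h t)" c]
    unfolding weak_def by blast
  moreover have "?Y' = (\<lambda>_. top_pref null)(t := promote c p)"
    by (intro ext) (simp add: override_on_def)
  ultimately show ?thesis
    using weak_promote_top by metis
qed

lemma null_in_menu:
  assumes r: "reachable S h" and moves: "S h i \<noteq> {}"
  shows "null \<in> S h i"
  using null_top_mover_null[OF r valid_profile_null_top moves]
    rule_in_menu[OF moves lift_profile_consistent[OF r valid_profile_null_top_upd[OF valid_profile_null_top, of i]]]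
  by simp

end

section \<open>Uniqueness of the equilibrium\<close>

lemma perfect_ex_post_eqD:
  "perfect_ex_post_eq S \<Sigma> \<Longrightarrow> reachable S h \<Longrightarrow> valid_strategy \<sigma>' \<Longrightarrow> valid_profile P \<Longrightarrow>
    weak (P a) (outcome S (\<lambda>b. \<Sigma> b (P b)) h a) (outcome S ((\<lambda>b. \<Sigma> b (P b))(a := \<sigma>')) h a)"
  unfolding perfect_ex_post_eq_def by blast

locale canonical_pao_equilibrium = canonical_pao S \<phi> null
  for S :: "('a::finite, 'o::finite) menufun" and \<phi> and null +
  fixes \<Sigma> :: "'a \<Rightarrow> 'o pref \<Rightarrow> 'o strategy"
  assumes \<Sigma>_valid: "valid_type_strategy \<Sigma>"
    and \<Sigma>_eq: "perfect_ex_post_eq S \<Sigma>"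
begin

definition straightforward_at :: "('a, 'o) chistA \<Rightarrow> bool" where
  "straightforward_at h \<longleftrightarrow>
     (\<forall>b p. strict_pref p \<longrightarrow> S h b \<noteq> {} \<longrightarrow> \<Sigma> b p (h b) (S h b) = best p (S h b))"

lemma valid_strategies_\<Sigma>: "valid_profile P \<Longrightarrow> valid_strategies (\<lambda>b. \<Sigma> b (P b))"
  using \<Sigma>_valid unfolding valid_strategies_def valid_type_strategy_def valid_profile_def by blast

lemma \<Sigma>_in_menu: "strict_pref p \<Longrightarrow> S h b \<noteq> {} \<Longrightarrow> \<Sigma> b p (h b) (S h b) \<in> S h b"
  using \<Sigma>_valid unfolding valid_type_strategy_def valid_strategy_def by blast

context
  fixes h :: "('a, 'o) chistA"
  assumes r: "reachable S h"
    and later: "\<And>g. reachable S g \<Longrightarrow> hist_size g < hist_size h \<Longrightarrow> straightforward_at g"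
begin

lemma null_top_deviation_null:
  assumes i: "S h i \<noteq> {}"
  shows "outcome S ((\<lambda>k. \<Sigma> k (top_pref null))(i := straightforward (top_pref null))) h i = null"
proof -
  let ?N = "top_pref null"
  let ?\<sigma> = "(\<lambda>k. \<Sigma> k ?N)(i := straightforward ?N)"
  let ?Y = "\<lambda>k. if S h k = {} then ?N else promote (?\<sigma> k (h k) (S h k)) ?N"
  have vs: "valid_strategies ?\<sigma>"
    by (rule valid_strategies_upd[OF valid_strategies_\<Sigma>[OF valid_profile_null_top]
          valid_strategy_straightforward[OF strict_pref_top_pref]])
  have "outcome S ?\<sigma> h = \<phi> (lift_profile h ?Y)"
  proof (rule outcome_mstep[OF r _ vs valid_profile_null_top])
    show "\<not> (\<forall>k. S h k = {})" using i by blast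
    fix g k assume "reachable S g" "hist_size g < hist_size h"
      and "\<forall>k. prefix (mstep S ?\<sigma> h k) (g k)" and "S g k \<noteq> {}"
    then show "?\<sigma> k (g k) (S g k) = best ?N (S g k)"
      using later[of g] strict_pref_top_pref[of null] unfolding straightforward_at_def
      by (auto simp: straightforward_def)
  qed
  moreover have "best ?N (S h i) = null"
    by (rule best_top_pref[OF null_in_menu[OF r i]])
  then have "?Y = ?Y(i := ?N)"
    using i by (intro ext) (simp add: straightforward_def promote_top_pref)
  moreover have "\<phi> (lift_profile h (?Y(i := ?N))) i = null"
    by (rule null_top_mover_null[OF r _ i]) (simp add: valid_profile_def strict_pref_top_pref strict_pref_promote)
  ultimately show ?thesis
    by metis
qed

text \<open>Choosing null and then playing straightforwardly secures null to a null-top mover.\<close>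
lemma null_top_outcome_null:
  assumes i: "S h i \<noteq> {}"
  shows "outcome S (\<lambda>k. \<Sigma> k (top_pref null)) h i = null"
proof -
  have "weak (top_pref null) (outcome S (\<lambda>k. \<Sigma> k (top_pref null)) h i)
      (outcome S ((\<lambda>k. \<Sigma> k (top_pref null))(i := straightforward (top_pref null))) h i)"
    using perfect_ex_post_eqD[OF \<Sigma>_eq r valid_strategy_straightforward[OF strict_pref_top_pref]
        valid_profile_null_top] .
  then show ?thesis
    unfolding null_top_deviation_null[OF i] by (rule weak_top_pref)
qed

text \<open>Since every mover receives null, turning the movers other than b into the null-top
  type changes nothing, and then b obtains exactly her choice.\<close>
lemma null_top_chooses_null:
  assumes moves: "S h b \<noteq> {}"
  shows "\<Sigma> b (top_pref null) (h b) (S h b) = null"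
proof -
  let ?N = "top_pref null"
  let ?c = "\<lambda>i. \<Sigma> i ?N (h i) (S h i)"
  let ?Y = "\<lambda>i. if S h i = {} then ?N else promote (?c i) ?N"
  have Y: "valid_profile ?Y"
    by (simp add: valid_profile_def strict_pref_top_pref strict_pref_promote)
  have outcome: "outcome S (\<lambda>k. \<Sigma> k ?N) h = \<phi> (lift_profile h ?Y)"
  proof (rule outcome_mstep[OF r _ valid_strategies_\<Sigma>[OF valid_profile_null_top] valid_profile_null_top])
    show "\<not> (\<forall>i. S h i = {})" using moves by blast
    fix g i assume "reachable S g" "hist_size g < hist_size h"
      and "\<forall>k. prefix (mstep S (\<lambda>k. \<Sigma> k ?N) h k) (g k)" and "S g i \<noteq> {}"
    then show "\<Sigma> i ?N (g i) (S g i) = best ?N (S g i)"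
      using later[of g] strict_pref_top_pref[of null] unfolding straightforward_at_def by simp
  qed
  let ?F = "{i. S h i \<noteq> {}} - {b}"
  have "\<forall>j\<in>?F. S h j \<noteq> {} \<and> \<phi> (lift_profile h ?Y) j = null"
    using null_top_outcome_null unfolding outcome by blast
  then have "\<phi> (lift_profile h (override_on ?Y (\<lambda>_. ?N) ?F)) = \<phi> (lift_profile h ?Y)"
    by (rule null_top_override_unchanged[OF r Y])
  moreover have "override_on ?Y (\<lambda>_. ?N) ?F = (\<lambda>_. ?N)(b := promote (?c b) ?N)"
    using moves by (intro ext) (auto simp: override_on_def promote_top_pref)
  ultimately have "\<phi> (lift_profile h ?Y) b = ?c b"
    using menu_item_promoted[OF r \<Sigma>_in_menu[OF strict_pref_top_pref[of null] moves] strict_pref_top_pref[of null]]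
    by simp
  then show ?thesis
    using null_top_outcome_null[OF moves] unfolding outcome by simp
qed

lemma first_choice_obtained:
  assumes moves: "S h a \<noteq> {}" and p: "strict_pref p" and \<tau>: "valid_strategy \<tau>"
    and \<tau>_later: "\<And>g. reachable S g \<Longrightarrow> hist_size g < hist_size h \<Longrightarrow>
      prefix (h a @ [(S h a, \<tau> (h a) (S h a))]) (g a) \<Longrightarrow> S g a \<noteq> {} \<Longrightarrow> \<tau> (g a) (S g a) = best p (S g a)"
  shows "outcome S ((\<lambda>b. \<Sigma> b (top_pref null))(a := \<tau>)) h a = \<tau> (h a) (S h a)"
proof -
  let ?N = "top_pref null" and ?c = "\<tau> (h a) (S h a)"
  let ?P = "(\<lambda>_. ?N)(a := p)" and ?\<sigma> = "(\<lambda>b. \<Sigma> b ?N)(a := \<tau>)"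
  have P: "valid_profile ?P"
    by (rule valid_profile_upd[OF valid_profile_null_top p])
  have vs: "valid_strategies ?\<sigma>"
    by (rule valid_strategies_upd[OF valid_strategies_\<Sigma>[OF valid_profile_null_top] \<tau>])
  have first: "mstep S ?\<sigma> h a = h a @ [(S h a, ?c)]"
    using moves by (simp add: mstep_def)
  have "outcome S ?\<sigma> h = \<phi> (lift_profile h
      (\<lambda>i. if S h i = {} then ?P i else promote (?\<sigma> i (h i) (S h i)) (?P i)))"
  proof (rule outcome_mstep[OF r _ vs P])
    show "\<not> (\<forall>i. S h i = {})" using moves by blast
    fix g i assume g: "reachable S g" "hist_size g < hist_size h"
      and after: "\<forall>k. prefix (mstep S ?\<sigma> h k) (g k)" and moves_g: "S g i \<noteq> {}"
    show "?\<sigma> i (g i) (S g i) = best (?P i) (S g i)"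
    proof (cases "i = a")
      case True
      have "prefix (h a @ [(S h a, ?c)]) (g a)"
        using spec[OF after, of a] unfolding first .
      then show ?thesis
        using \<tau>_later[OF g] moves_g True by simp
    next
      case False
      then show ?thesis
        using later[OF g] moves_g strict_pref_top_pref[of null] unfolding straightforward_at_def by simp
    qed
  qed
  also have "(\<lambda>i. if S h i = {} then ?P i else promote (?\<sigma> i (h i) (S h i)) (?P i))
      = (\<lambda>_. ?N)(a := promote ?c p)"
    using moves null_top_chooses_null by (intro ext) (simp add: promote_top_pref)
  finally have outcome: "outcome S ?\<sigma> h = \<phi> (lift_profile h ((\<lambda>_. ?N)(a := promote ?c p)))" .
  have "?c \<in> S h a"
    using \<tau> moves unfolding valid_strategy_def by blast
  then show ?thesis
    unfolding outcome by (rule menu_item_promoted[OF r _ p])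
qed

text \<open>If agent a of type p chose some y other than her best x, let all others be of null-top
  type: a then obtains y, whereas choosing x and then playing straightforwardly would
  obtain x.\<close>
lemma straightforward_at_step:
  assumes moves: "S h a \<noteq> {}" and p: "strict_pref p"
  shows "\<Sigma> a p (h a) (S h a) = best p (S h a)"
proof (rule ccontr)
  let ?N = "top_pref null" and ?y = "\<Sigma> a p (h a) (S h a)" and ?x = "best p (S h a)"
  let ?P = "(\<lambda>_. ?N)(a := p)" and ?\<sigma> = "\<lambda>g \<Omega>. if g = h a \<and> \<Omega> = S h a then ?x else best p \<Omega>"
  assume yx: "?y \<noteq> ?x"
  have \<sigma>: "valid_strategy ?\<sigma>"
    using best_in[OF p] moves unfolding valid_strategy_def by auto
  have "outcome S ((\<lambda>b. \<Sigma> b ?N)(a := \<Sigma> a p)) h a = ?y"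
    by (rule first_choice_obtained[OF moves p])
      (use \<Sigma>_valid p later in \<open>auto simp: valid_type_strategy_def straightforward_at_def\<close>)
  moreover have "outcome S ((\<lambda>b. \<Sigma> b ?N)(a := ?\<sigma>)) h a = ?x"
    by (rule first_choice_obtained[OF moves p \<sigma>, simplified]) (auto simp: prefix_def)
  moreover have "weak (?P a) (outcome S (\<lambda>b. \<Sigma> b (?P b)) h a) (outcome S ((\<lambda>b. \<Sigma> b (?P b))(a := ?\<sigma>)) h a)"
    by (rule perfect_ex_post_eqD[OF \<Sigma>_eq r \<sigma> valid_profile_upd[OF valid_profile_null_top p]])
  moreover have "(\<lambda>b. \<Sigma> b (?P b)) = (\<lambda>b. \<Sigma> b ?N)(a := \<Sigma> a p)"
    by auto
  ultimately have "weak p ?y ?x"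
    by simp
  moreover have "p ?x ?y"
    using best_in_weak[OF p moves] \<Sigma>_in_menu[OF p moves] yx by (auto simp: weak_def)
  ultimately show False
    using weak_not_strict_rev[OF p] by blast
qed

end

lemma straightforward_at_reachable: "reachable S h \<Longrightarrow> straightforward_at h"
proof (induction "hist_size h" arbitrary: h rule: less_induct)
  case less
  then show ?case
    using straightforward_at_step[OF less.prems] unfolding straightforward_at_def by blast
qed

end

theorem proposition2:
  fixes null :: "'o::finite"
    and \<phi> :: "('a::finite, 'o) rule"
    and S :: "('a, 'o) menufun"
  assumes IR: "individually_rational null \<phi>"
    and RM: "resource_monotonic null \<phi>"
    and SP: "strategy_proof \<phi>"
    and MD: "monotonic_discoverability \<phi>"
    and canon: "S = canonical_menu \<phi>"
    and PAO: "is_PAO S"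
    and seq: "sequentializes S \<phi>"
  shows "valid_type_strategy (\<lambda>a::'a. straightforward :: 'o pref \<Rightarrow> 'o strategy)
       \<and> perfect_ex_post_eq S (\<lambda>a. straightforward)
       \<and> (\<forall>\<Sigma>. valid_type_strategy \<Sigma> \<and> perfect_ex_post_eq S \<Sigma> \<longrightarrow>
            (\<forall>a p hA. strict_pref p \<longrightarrow> reachable S hA \<longrightarrow> S hA a \<noteq> {} \<longrightarrow>
               \<Sigma> a p (hA a) (S hA a) = straightforward p (hA a) (S hA a)))"
proof (intro conjI allI impI)
  interpret canonical_pao S \<phi> null
    by unfold_locales (fact PAO seq IR RM SP MD canon)+
  show "valid_type_strategy (\<lambda>a::'a. straightforward :: 'o pref \<Rightarrow> 'o strategy)"
    unfolding valid_type_strategy_def using valid_strategy_straightforward by blast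
  show "perfect_ex_post_eq S (\<lambda>a. straightforward)"
    by (rule perfect_ex_post_eq_straightforward[OF SP])
  fix \<Sigma> :: "'a \<Rightarrow> 'o pref \<Rightarrow> 'o strategy" and a and p :: "'o pref" and hA
  assume "valid_type_strategy \<Sigma> \<and> perfect_ex_post_eq S \<Sigma>"
  then interpret canonical_pao_equilibrium S \<phi> null \<Sigma>
    by unfold_locales blast+
  assume "strict_pref p" "reachable S hA" "S hA a \<noteq> {}"
  then show "\<Sigma> a p (hA a) (S hA a) = straightforward p (hA a) (S hA a)"
    using straightforward_at_reachable unfolding straightforward_at_def straightforward_def by blast
qed

end
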